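(* Let $g_1(z),\dots,g_m(z)$ be analytic functions near $\lambda\in\mathbb C$, let $w(z)=|Wr(g_1,\dots,g_m)|$ and let $Q(z,\partial_z)$ be the differential operator $Qu=|Wr(g_1,\dots,g_m,u)|$, written as $$Q=w(z)\partial_z^m-w'(z)\partial_z^{m-1}+v(z)\partial_z^{m-2}+(\text{terms of order}\le m-3).$$ Suppose $w(\lambda)=0$ and $w'(\lambda)\ne0$. Then there exists a unique distribution of the form $c=\delta_\lambda\circ(\partial_z+\gamma)$, $\gamma\in\mathbb C$, such that $c\circ Q=0$ (i.e. $c(Qu)=0$ for every analytic $u$), and $$\gamma=\frac{v(\lambda)-w''(\lambda)}{w'(\lambda)}.$$
   Context: $Wr(v_1,\dots,v_k)$ is the $k\times k$ matrix whose first row is $(v_1,\dots,v_k)$ and each subsequent row is the $z$-derivative of the previous one; $|\cdot|$ is the determinant. $\delta_\lambda$ denotes evaluation at $z=\lambda$, so $\delta_\lambda\circ(\partial_z+\gamma)$ maps $u$ to $u'(\lambda)+\gamma u(\lambda)$. *)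

theory Defs
  imports "HOL-Analysis.Analysis" "Jordan_Normal_Form.Determinant"
begin

definition Wr_mat :: "(complex \<Rightarrow> complex) list \<Rightarrow> complex \<Rightarrow> complex mat" where
  "Wr_mat vs z = mat (length vs) (length vs) (\<lambda>(i,j). (deriv ^^ i) (vs ! j) z)"

definition Wr :: "(complex \<Rightarrow> complex) list \<Rightarrow> complex \<Rightarrow> complex" where
  "Wr vs z = det (Wr_mat vs z)"

definition Qop :: "(complex \<Rightarrow> complex) list \<Rightarrow> (complex \<Rightarrow> complex) \<Rightarrow> complex \<Rightarrow> complex" where
  "Qop gs u = Wr (gs @ [u])"

text \<open>Coefficient of the derivative of order k (k \<le> m) of u in Q u: expanding the
  determinant along the last column (which is u, u', ..., u^(m)), it is the cofactor of
  the entry (k, m); it does not depend on u (the last column is deleted), so we use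
  the zero function as a dummy last entry.\<close>
definition Qcoeff :: "(complex \<Rightarrow> complex) list \<Rightarrow> nat \<Rightarrow> complex \<Rightarrow> complex" where
  "Qcoeff gs k z = cofactor (Wr_mat (gs @ [\<lambda>_. 0]) z) k (length gs)"

definition Qv :: "(complex \<Rightarrow> complex) list \<Rightarrow> complex \<Rightarrow> complex" where
  "Qv gs z = (if 2 \<le> length gs then Qcoeff gs (length gs - 2) z else 0)"

definition delta_shift :: "complex \<Rightarrow> complex \<Rightarrow> (complex \<Rightarrow> complex) \<Rightarrow> complex" where
  "delta_shift lam \<gamma> f = deriv f lam + \<gamma> * f lam"

end

theory Submission
  imports Defs "HOL-Complex_Analysis.Complex_Analysis"
begin

text \<open>Expanding Q u = |Wr(g_1,...,g_m,u)| along its last column gives Q = \<Sum>k\<le>m. C_k \<partial>^k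
  with cofactors C_k, where C_m = w and C_(m-1) = -w'. For c = \<delta>_lam \<circ> (\<partial> + \<gamma>) the functional
  c \<circ> Q is \<Sum>j. a_j \<delta>_lam \<circ> \<partial>^j with a_j = C_(j-1)(lam) + C_j'(lam) + \<gamma> C_j(lam).
  As w(lam) = 0, the coefficients a_(m+1) = w(lam) and a_m = \<gamma> w(lam) vanish, while
  a_(m-1) = v(lam) - w''(lam) - \<gamma> w'(lam); testing with (z - lam)^(m-1) shows that c \<circ> Q = 0
  forces a_(m-1) = 0, which pins down \<gamma>. Conversely, once a_(m-1) = 0, c \<circ> Q only sees jets of
  order below m - 1 and kills every g_i because Q g_i = 0. These jets, completed by the m-th
  derivatives, form a matrix whose determinant is w'(lam) \<noteq> 0, so all a_j vanish.\<close>

lemma det_mat_sum_permutes: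
  "det (mat n n (\<lambda>(i,j). f i j)) = (\<Sum>p | p permutes {0..<n}. signof p * (\<Prod>i<n. f i (p i)))"
  by (subst det_def'[of _ n]) (auto simp: permutes_in_image atLeast0LessThan intro!: sum.cong prod.cong)

lemma has_field_derivative_det_mat:
  fixes a :: "nat \<Rightarrow> nat \<Rightarrow> 'a :: real_normed_field \<Rightarrow> 'a"
  assumes "\<And>i j. i < n \<Longrightarrow> j < n \<Longrightarrow> (a i j has_field_derivative a' i j) (at z)"
  shows "((\<lambda>z. det (mat n n (\<lambda>(i,j). a i j z))) has_field_derivative
           (\<Sum>r<n. det (mat n n (\<lambda>(i,j). if i = r then a' i j else a i j z)))) (at z)"
proof -
  let ?P = "{p. p permutes {0..<n}}"
  have "((\<lambda>z. \<Sum>p\<in>?P. signof p * (\<Prod>i<n. a i (p i) z)) has_field_derivative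
          (\<Sum>p\<in>?P. signof p * (\<Sum>r<n. a' r (p r) * (\<Prod>i\<in>{..<n} - {r}. a i (p i) z)))) (at z)"
    by (intro DERIV_sum DERIV_cmult has_field_derivative_prod assms)
       (auto simp: permutes_in_image atLeast0LessThan)
  also have "(\<Sum>p\<in>?P. signof p * (\<Sum>r<n. a' r (p r) * (\<Prod>i\<in>{..<n} - {r}. a i (p i) z)))
      = (\<Sum>r<n. \<Sum>p\<in>?P. signof p * (\<Prod>i<n. if i = r then a' i (p i) else a i (p i) z))"
    by (subst sum.swap) (simp add: sum_distrib_left prod.delta_remove)
  finally show ?thesis
    by (simp add: det_mat_sum_permutes if_distrib[of "\<lambda>f. f (p i)" for p i])
qed

lemma analytic_on_det_mat:
  assumes "\<And>i j. i < n \<Longrightarrow> j < n \<Longrightarrow> a i j analytic_on A"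
  shows "(\<lambda>z. det (mat n n (\<lambda>(i,j). a i j z))) analytic_on A"
  unfolding det_mat_sum_permutes
  by (intro analytic_intros assms) (auto simp: permutes_in_image atLeast0LessThan)

lemma eventually_analytic_at:
  assumes "f analytic_on {z}"
  shows "eventually (\<lambda>w. f analytic_on {w}) (nhds z)"
proof -
  obtain S where "open S" "z \<in> S" "f holomorphic_on S" using assms by (auto simp: analytic_at)
  then show ?thesis
    by (auto intro: eventually_nhds_in_open[THEN eventually_mono] holomorphic_on_imp_analytic_at)
qed

lemma det_neq_0_imp_rows_independent:
  fixes M :: "nat \<Rightarrow> nat \<Rightarrow> 'a :: idom"
  assumes det: "det (mat n n (\<lambda>(i,j). M i j)) \<noteq> 0"
    and lincomb: "\<And>j. j < n \<Longrightarrow> (\<Sum>i<n. a i * M i j) = 0" and "i < n"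
  shows "a i = 0"
proof -
  let ?A = "transpose_mat (mat n n (\<lambda>(i,j). M i j))"
  have "det ?A \<noteq> 0" using det det_transpose[of "mat n n (\<lambda>(i,j). M i j)" n] by simp
  moreover have "?A *\<^sub>v vec n a = 0\<^sub>v n"
    using lincomb by (intro eq_vecI) (auto simp: scalar_prod_def atLeast0LessThan mult.commute)
  moreover have "?A \<in> carrier_mat n n" "vec n a \<in> carrier_vec n" by auto
  ultimately have "vec n a = 0\<^sub>v n" using det_0_iff_vec_prod_zero by blast
  then show ?thesis using \<open>i < n\<close> by (metis index_vec index_zero_vec(1))
qed

lemma Wr_eq_det_mat:
  "Wr fs = (\<lambda>z. det (mat (length fs) (length fs) (\<lambda>(i,j). (deriv ^^ i) (fs ! j) z)))"
  by (auto simp: Wr_def Wr_mat_def)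

lemma Wr_Nil [simp]: "Wr [] z = 1"
proof -
  have "mat 0 0 f = (1\<^sub>m 0 :: complex mat)" for f by (intro eq_matI) auto
  then show ?thesis by (simp add: Wr_def Wr_mat_def)
qed

lemma analytic_on_Wr:
  assumes "\<forall>f \<in> set fs. f analytic_on A"
  shows "Wr fs analytic_on A"
  unfolding Wr_eq_det_mat by (intro analytic_on_det_mat analytic_higher_deriv) (use assms in auto)

lemma has_field_derivative_higher_deriv:
  assumes "f analytic_on {z}"
  shows "((deriv ^^ i) f has_field_derivative (deriv ^^ Suc i) f z) (at z)"
  using analytic_on_imp_differentiable_at[OF analytic_higher_deriv[OF assms]]
  by (simp add: DERIV_deriv_iff_field_differentiable)

text \<open>Differentiating the Wronskian row by row, every row but the last one reproduces
  the row below it, so only the last row contributes.\<close>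
lemma deriv_Wr:
  assumes analytic: "\<forall>f \<in> set fs. f analytic_on {z}" and "fs \<noteq> []"
  defines "n \<equiv> length fs"
  shows "deriv (Wr fs) z = det (mat n n (\<lambda>(i,j). (deriv ^^ (if i = n - 1 then n else i)) (fs ! j) z))"
proof -
  have n_pos: "n > 0" using \<open>fs \<noteq> []\<close> by (simp add: n_def)
  let ?M = "\<lambda>r. mat n n (\<lambda>(i,j). if i = r then (deriv ^^ Suc i) (fs ! j) z else (deriv ^^ i) (fs ! j) z)"
  have "(Wr fs has_field_derivative (\<Sum>r<n. det (?M r))) (at z)"
    unfolding Wr_eq_det_mat n_def
    by (rule has_field_derivative_det_mat, rule has_field_derivative_higher_deriv) (use analytic in auto)
  moreover have vanish: "det (?M r) = 0" if "r < n - 1" for r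
  proof (rule det_identical_rows[of _ n r "Suc r"])
    show "row (?M r) r = row (?M r) (Suc r)" using that by (intro eq_vecI) auto
  qed (use that in auto)
  then have "(\<Sum>r<n. det (?M r)) = (\<Sum>r\<in>{n - 1}. det (?M r))"
    using n_pos by (intro sum.mono_neutral_right) (auto intro!: vanish)
  moreover have "?M (n - 1) = mat n n (\<lambda>(i,j). (deriv ^^ (if i = n - 1 then n else i)) (fs ! j) z)"
    using n_pos by (intro eq_matI) auto
  ultimately show ?thesis by (simp add: DERIV_imp_deriv)
qed

lemma Qcoeff_eq_det:
  "Qcoeff gs k z = (-1) ^ (k + length gs) *
     det (mat (length gs) (length gs) (\<lambda>(i,j). (deriv ^^ (if i < k then i else Suc i)) (gs ! j) z))"
  unfolding Qcoeff_def cofactor_def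
  by (intro arg_cong2[where f = "(*)"] arg_cong[where f = det] eq_matI)
     (auto simp: mat_delete_def Wr_mat_def nth_append)

lemma analytic_on_Qcoeff:
  assumes "\<forall>g \<in> set gs. g analytic_on A"
  shows "Qcoeff gs k analytic_on A"
  unfolding Qcoeff_eq_det
  by (intro analytic_intros analytic_on_det_mat analytic_higher_deriv) (use assms in auto)

lemma Qcoeff_length: "Qcoeff gs (length gs) = Wr gs"
  unfolding Qcoeff_eq_det Wr_eq_det_mat
  by (auto simp: mult_2[symmetric] intro!: arg_cong[where f = det] eq_matI)

lemma Qcoeff_pred_length:
  assumes "\<forall>g \<in> set gs. g analytic_on {z}" and "gs \<noteq> []"
  shows "Qcoeff gs (length gs - 1) z = - deriv (Wr gs) z"
proof -
  obtain m where m: "length gs = Suc m" using \<open>gs \<noteq> []\<close> by (cases gs) auto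
  then show ?thesis
    unfolding Qcoeff_eq_det deriv_Wr[OF assms]
    by (simp, intro arg_cong[where f = det] eq_matI) auto
qed

lemma deriv_Qcoeff_pred_length:
  assumes analytic: "\<forall>g \<in> set gs. g analytic_on {z}" and "gs \<noteq> []"
  shows "deriv (Qcoeff gs (length gs - 1)) z = - (deriv ^^ 2) (Wr gs) z"
proof -
  have "eventually (\<lambda>w. \<forall>g \<in> set gs. g analytic_on {w}) (nhds z)"
    using analytic by (intro eventually_ball_finite ballI eventually_analytic_at) auto
  then have "eventually (\<lambda>w. Qcoeff gs (length gs - 1) w = - deriv (Wr gs) w) (nhds z)"
    by eventually_elim (use \<open>gs \<noteq> []\<close> Qcoeff_pred_length in auto)
  then have "deriv (Qcoeff gs (length gs - 1)) z = deriv (\<lambda>w. - deriv (Wr gs) w) z"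
    by (rule deriv_cong_ev) simp
  also have "\<dots> = - deriv (deriv (Wr gs)) z"
    using analytic by (intro deriv_minus analytic_on_imp_differentiable_at analytic_deriv analytic_on_Wr) auto
  finally show ?thesis by (simp add: numeral_2_eq_2)
qed

lemma Qop_eq_sum:
  "Qop gs u z = (\<Sum>k\<le>length gs. (deriv ^^ k) u z * Qcoeff gs k z)"
proof -
  let ?A = "Wr_mat (gs @ [u]) z"
  have "Qop gs u z = (\<Sum>k<Suc (length gs). ?A $$ (k, length gs) * cofactor ?A k (length gs))"
    unfolding Qop_def Wr_def by (rule laplace_expansion_column) (auto simp: Wr_mat_def)
  also have "\<dots> = (\<Sum>k\<le>length gs. (deriv ^^ k) u z * Qcoeff gs k z)"
    unfolding Qcoeff_def cofactor_def lessThan_Suc_atMost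
    by (intro sum.cong arg_cong2[where f = "(*)"] arg_cong[where f = det] eq_matI)
       (auto simp: mat_delete_def Wr_mat_def nth_append)
  finally show ?thesis .
qed

lemma Qop_eq_0_if_mem:
  assumes "g \<in> set gs"
  shows "Qop gs g = (\<lambda>_. 0)"
proof
  fix z
  obtain i where i: "i < length gs" "gs ! i = g" using assms by (auto simp: in_set_conv_nth)
  show "Qop gs g z = 0"
    unfolding Qop_def Wr_def
  proof (rule det_identical_columns[of _ "Suc (length gs)" i "length gs"])
    show "col (Wr_mat (gs @ [g]) z) i = col (Wr_mat (gs @ [g]) z) (length gs)"
      using i by (intro eq_vecI) (auto simp: Wr_mat_def nth_append)
  qed (use i in \<open>auto simp: Wr_mat_def\<close>)
qed

definition delta_shift_coeff ::
    "complex \<Rightarrow> complex \<Rightarrow> (nat \<Rightarrow> complex \<Rightarrow> complex) \<Rightarrow> nat \<Rightarrow> nat \<Rightarrow> complex" where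
  "delta_shift_coeff lam \<gamma> C m j =
     (if 0 < j then C (j - 1) lam else 0) + (if j \<le> m then deriv (C j) lam + \<gamma> * C j lam else 0)"

lemma delta_shift_diff_op:
  assumes C: "\<And>k. k \<le> m \<Longrightarrow> C k field_differentiable at lam" and u: "u analytic_on {lam}"
  shows "delta_shift lam \<gamma> (\<lambda>z. \<Sum>k\<le>m. (deriv ^^ k) u z * C k z)
           = (\<Sum>j\<le>Suc m. (deriv ^^ j) u lam * delta_shift_coeff lam \<gamma> C m j)"
proof -
  have "((\<lambda>z. \<Sum>k\<le>m. (deriv ^^ k) u z * C k z) has_field_derivative
          (\<Sum>k\<le>m. (deriv ^^ Suc k) u lam * C k lam + deriv (C k) lam * (deriv ^^ k) u lam)) (at lam)"
    using C by (intro DERIV_sum DERIV_mult has_field_derivative_higher_deriv[OF u])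
      (auto simp: DERIV_deriv_iff_field_differentiable)
  then have "delta_shift lam \<gamma> (\<lambda>z. \<Sum>k\<le>m. (deriv ^^ k) u z * C k z)
      = (\<Sum>k\<le>m. (deriv ^^ Suc k) u lam * C k lam)
        + (\<Sum>k\<le>m. (deriv ^^ k) u lam * (deriv (C k) lam + \<gamma> * C k lam))"
    unfolding delta_shift_def
    by (simp add: DERIV_imp_deriv sum.distrib sum_distrib_left algebra_simps)
  also have "(\<Sum>k\<le>m. (deriv ^^ Suc k) u lam * C k lam)
      = (\<Sum>j\<le>Suc m. (deriv ^^ j) u lam * (if 0 < j then C (j - 1) lam else 0))"
    by (simp only: sum.atMost_Suc_shift) simp
  also have "(\<Sum>k\<le>m. (deriv ^^ k) u lam * (deriv (C k) lam + \<gamma> * C k lam))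
      = (\<Sum>j\<le>Suc m. (deriv ^^ j) u lam * (if j \<le> m then deriv (C j) lam + \<gamma> * C j lam else 0))"
    by (simp add: sum.atMost_Suc)
  finally show ?thesis
    by (simp add: delta_shift_coeff_def distrib_left sum.distrib)
qed

lemma sum_higher_deriv_power_at_center:
  "(\<Sum>j<Suc n. (deriv ^^ j) (\<lambda>w. (w - z) ^ n) z * a j) = fact n * (a n :: complex)"
  by (simp add: higher_deriv_power pochhammer_fact zero_power)

lemma delta_shift_Qop:
  assumes "\<forall>g \<in> set gs. g analytic_on {lam}" and "u analytic_on {lam}"
  shows "delta_shift lam \<gamma> (Qop gs u)
           = (\<Sum>j\<le>Suc (length gs). (deriv ^^ j) u lam * delta_shift_coeff lam \<gamma> (Qcoeff gs) (length gs) j)"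
proof -
  have Qop_u: "Qop gs u = (\<lambda>z. \<Sum>k\<le>length gs. (deriv ^^ k) u z * Qcoeff gs k z)"
    by (rule ext) (rule Qop_eq_sum)
  show ?thesis
    unfolding Qop_u by (rule delta_shift_diff_op)
       (use assms in \<open>auto intro: analytic_on_imp_differentiable_at analytic_on_Qcoeff\<close>)
qed

lemma delta_shift_coeff_Qcoeff_Suc_length:
  "delta_shift_coeff lam \<gamma> (Qcoeff gs) (length gs) (Suc (length gs)) = Wr gs lam"
  by (simp add: delta_shift_coeff_def Qcoeff_length)

lemma delta_shift_coeff_Qcoeff_length:
  assumes "\<forall>g \<in> set gs. g analytic_on {lam}" and "gs \<noteq> []"
  shows "delta_shift_coeff lam \<gamma> (Qcoeff gs) (length gs) (length gs) = \<gamma> * Wr gs lam"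
  using Qcoeff_pred_length[OF assms] \<open>gs \<noteq> []\<close> by (simp add: delta_shift_coeff_def Qcoeff_length)

lemma delta_shift_coeff_Qcoeff_pred_length:
  assumes "\<forall>g \<in> set gs. g analytic_on {lam}" and "gs \<noteq> []"
  shows "delta_shift_coeff lam \<gamma> (Qcoeff gs) (length gs) (length gs - 1)
           = Qv gs lam - (deriv ^^ 2) (Wr gs) lam - \<gamma> * deriv (Wr gs) lam"
  using Qcoeff_pred_length[OF assms] deriv_Qcoeff_pred_length[OF assms] \<open>gs \<noteq> []\<close>
  by (auto simp: delta_shift_coeff_def Qv_def numeral_2_eq_2)

lemma delta_shift_Qop_if_Wr_eq_0:
  assumes "\<forall>g \<in> set gs. g analytic_on {lam}" and "gs \<noteq> []" and "Wr gs lam = 0"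
    and "u analytic_on {lam}"
  shows "delta_shift lam \<gamma> (Qop gs u)
           = (\<Sum>j<length gs. (deriv ^^ j) u lam * delta_shift_coeff lam \<gamma> (Qcoeff gs) (length gs) j)"
  using assms by (simp add: delta_shift_Qop atMost_Suc lessThan_Suc_atMost[symmetric]
      delta_shift_coeff_Qcoeff_Suc_length delta_shift_coeff_Qcoeff_length)

lemma delta_shift_coeff_Qcoeff_eq_0:
  assumes analytic: "\<forall>g \<in> set gs. g analytic_on {lam}" and "gs \<noteq> []"
    and "Wr gs lam = 0" and "deriv (Wr gs) lam \<noteq> 0"
    and top: "delta_shift_coeff lam \<gamma> (Qcoeff gs) (length gs) (length gs - 1) = 0"
    and "j < length gs"
  shows "delta_shift_coeff lam \<gamma> (Qcoeff gs) (length gs) j = 0"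
proof -
  define m where "m = length gs"
  let ?a = "delta_shift_coeff lam \<gamma> (Qcoeff gs) m"
  let ?M = "\<lambda>j i. (deriv ^^ (if j = m - 1 then m else j)) (gs ! i) lam"
  show ?thesis
    unfolding m_def[symmetric]
  proof (rule det_neq_0_imp_rows_independent[where M = ?M])
    show "det (mat m m (\<lambda>(j,i). ?M j i)) \<noteq> 0"
      using assms deriv_Wr[OF analytic \<open>gs \<noteq> []\<close>] unfolding m_def by simp
  next
    fix i assume "i < m"
    then have gi: "gs ! i \<in> set gs" by (simp add: m_def)
    have "(\<Sum>j<m. ?a j * ?M j i) = (\<Sum>j<m. (deriv ^^ j) (gs ! i) lam * ?a j)"
      using top by (intro sum.cong) (auto simp: m_def)
    also have "\<dots> = delta_shift lam \<gamma> (Qop gs (gs ! i))"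
      using assms gi by (simp add: delta_shift_Qop_if_Wr_eq_0 m_def)
    also have "\<dots> = 0"
      by (simp add: Qop_eq_0_if_mem[OF gi] delta_shift_def)
    finally show "(\<Sum>j<m. ?a j * ?M j i) = 0" .
  qed (use \<open>j < length gs\<close> in \<open>simp add: m_def\<close>)
qed

lemma delta_shift_Qop_eq_0_iff:
  assumes analytic: "\<forall>g \<in> set gs. g analytic_on {lam}"
    and "Wr gs lam = 0" and "deriv (Wr gs) lam \<noteq> 0"
  shows "(\<forall>u. u analytic_on {lam} \<longrightarrow> delta_shift lam \<gamma> (Qop gs u) = 0)
           \<longleftrightarrow> delta_shift_coeff lam \<gamma> (Qcoeff gs) (length gs) (length gs - 1) = 0"
proof -
  have "gs \<noteq> []" using \<open>Wr gs lam = 0\<close> by auto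
  let ?a = "delta_shift_coeff lam \<gamma> (Qcoeff gs) (length gs)"
  show ?thesis
  proof
    assume annihilates: "\<forall>u. u analytic_on {lam} \<longrightarrow> delta_shift lam \<gamma> (Qop gs u) = 0"
    define p where "p = (\<lambda>z. (z - lam) ^ (length gs - 1))"
    have "p analytic_on {lam}" unfolding p_def by (intro analytic_intros)
    then have "0 = delta_shift lam \<gamma> (Qop gs p)" using annihilates by simp
    also have "\<dots> = (\<Sum>j<Suc (length gs - 1). (deriv ^^ j) p lam * ?a j)"
      using assms \<open>gs \<noteq> []\<close> \<open>p analytic_on {lam}\<close> by (simp add: delta_shift_Qop_if_Wr_eq_0)
    also have "\<dots> = fact (length gs - 1) * ?a (length gs - 1)"
      unfolding p_def by (rule sum_higher_deriv_power_at_center)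
    finally show "?a (length gs - 1) = 0" by simp
  next
    assume "?a (length gs - 1) = 0"
    then show "\<forall>u. u analytic_on {lam} \<longrightarrow> delta_shift lam \<gamma> (Qop gs u) = 0"
      using assms \<open>gs \<noteq> []\<close> by (simp add: delta_shift_Qop_if_Wr_eq_0 delta_shift_coeff_Qcoeff_eq_0)
  qed
qed

theorem mainTheorem10:
  fixes gs :: "(complex \<Rightarrow> complex) list" and lam :: complex
  assumes analytic: "\<forall>g \<in> set gs. g analytic_on {lam}"
    and w0: "Wr gs lam = 0"
    and w1: "deriv (Wr gs) lam \<noteq> 0"
  shows "(\<exists>!\<gamma>. \<forall>u. u analytic_on {lam} \<longrightarrow> delta_shift lam \<gamma> (Qop gs u) = 0)
       \<and> (\<forall>u. u analytic_on {lam} \<longrightarrow>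
            delta_shift lam ((Qv gs lam - (deriv ^^ 2) (Wr gs) lam) / deriv (Wr gs) lam) (Qop gs u) = 0)"
proof -
  define \<gamma>\<^sub>0 where "\<gamma>\<^sub>0 = (Qv gs lam - (deriv ^^ 2) (Wr gs) lam) / deriv (Wr gs) lam"
  have "gs \<noteq> []" using w0 by auto
  have "delta_shift_coeff lam \<gamma> (Qcoeff gs) (length gs) (length gs - 1) = 0 \<longleftrightarrow> \<gamma> = \<gamma>\<^sub>0" for \<gamma>
    unfolding delta_shift_coeff_Qcoeff_pred_length[OF analytic \<open>gs \<noteq> []\<close>] \<gamma>\<^sub>0_def
    using w1 by (auto simp: field_simps)
  then have "(\<forall>u. u analytic_on {lam} \<longrightarrow> delta_shift lam \<gamma> (Qop gs u) = 0) \<longleftrightarrow> \<gamma> = \<gamma>\<^sub>0" for \<gamma>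
    using delta_shift_Qop_eq_0_iff[OF analytic w0 w1] by blast
  then show ?thesis unfolding \<gamma>\<^sub>0_def[symmetric] by simp
qed

end
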